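(* Let $\mathcal{L}$ be a set closed under a unary connective $\neg$, and let $\mathcal{C}: 2^{\mathcal{L}}\to 2^{\mathcal{L}}$ be a C-logics satisfying Weak Compactness, $\neg$-R1 and $\neg$-R2. If $A\subseteq\mathcal{L}$, $a\in\mathcal{L}$ and $a\notin\mathcal{C}(A)$, then there is a maximal consistent set $B\supseteq A$ such that $a\notin B$.
   Context: A C-logics is a map $\mathcal{C}: 2^{\mathcal{L}}\to 2^{\mathcal{L}}$ satisfying Inclusion ($A\subseteq\mathcal{C}(A)$) and Cumulativity ($A\subseteq B\subseteq\mathcal{C}(A)\Rightarrow\mathcal{C}(A)=\mathcal{C}(B)$). Weak Compactness: if $\mathcal{C}(A)=\mathcal{L}$ then $\mathcal{C}(B)=\mathcal{L}$ for some finite $B\subseteq A$. $\neg$-R1: $\mathcal{C}(A\cup\{a,\neg a\})=\mathcal{L}$. $\neg$-R2: if $\mathcal{C}(A\cup\{\neg a\})=\mathcal{L}$ then $a\in\mathcal{C}(A)$ (for all $A\subseteq\mathcal{L}$, $a\in\mathcal{L}$). $A$ is consistent iff $\mathcal{C}(A)\neq\mathcal{L}$; maximal consistent iff consistent and every strict superset in $\mathcal{L}$ is inconsistent. *)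

theory Defs
  imports Main
begin

text \<open>The language L is modelled as the universe of a type 'a; the unary connective
  neg is a function 'a => 'a, so L is automatically closed under it.\<close>

definition C_logic :: "('a set \<Rightarrow> 'a set) \<Rightarrow> bool" where
  "C_logic C \<longleftrightarrow>
     (\<forall>A. A \<subseteq> C A) \<and>
     (\<forall>A B. A \<subseteq> B \<and> B \<subseteq> C A \<longrightarrow> C A = C B)"

definition weak_compactness :: "('a set \<Rightarrow> 'a set) \<Rightarrow> bool" where
  "weak_compactness C \<longleftrightarrow>
     (\<forall>A. C A = UNIV \<longrightarrow> (\<exists>B. B \<subseteq> A \<and> finite B \<and> C B = UNIV))"

definition neg_R1 :: "('a set \<Rightarrow> 'a set) \<Rightarrow> ('a \<Rightarrow> 'a) \<Rightarrow> bool" where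
  "neg_R1 C neg \<longleftrightarrow> (\<forall>A a. C (A \<union> {a, neg a}) = UNIV)"

definition neg_R2 :: "('a set \<Rightarrow> 'a set) \<Rightarrow> ('a \<Rightarrow> 'a) \<Rightarrow> bool" where
  "neg_R2 C neg \<longleftrightarrow> (\<forall>A a. C (A \<union> {neg a}) = UNIV \<longrightarrow> a \<in> C A)"

definition consistent :: "('a set \<Rightarrow> 'a set) \<Rightarrow> 'a set \<Rightarrow> bool" where
  "consistent C A \<longleftrightarrow> C A \<noteq> UNIV"

definition maximal_consistent :: "('a set \<Rightarrow> 'a set) \<Rightarrow> 'a set \<Rightarrow> bool" where
  "maximal_consistent C A \<longleftrightarrow>
     consistent C A \<and> (\<forall>B. A \<subset> B \<longrightarrow> \<not> consistent C B)"

end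

theory Submission
  imports Defs
begin

text \<open>By \<open>\<not>\<close>-R2, \<open>a \<notin> C(A)\<close> makes \<open>A \<union> {\<not>a}\<close> consistent. Weak compactness together with
  cumulativity makes the union of a chain of consistent sets consistent, so by Zorn's lemma
  \<open>A \<union> {\<not>a}\<close> extends to a maximal consistent set \<open>B\<close> (Lindenbaum's lemma). Since \<open>\<not>a \<in> B\<close>,
  \<open>\<not>\<close>-R1 forbids \<open>a \<in> B\<close>.\<close>

lemma C_logic_inconsistent_mono:
  assumes "C_logic C" and "X \<subseteq> Y" and "C X = UNIV"
  shows "C Y = UNIV"
proof -
  have "Y \<subseteq> C X"
    using assms(3) by simp
  with assms(1,2) have "C X = C Y"
    unfolding C_logic_def by blast
  with assms(3) show ?thesis by simp
qed

lemma weak_compactnessD: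
  assumes "weak_compactness C" and "C A = UNIV"
  obtains F where "F \<subseteq> A" and "finite F" and "C F = UNIV"
  using assms unfolding weak_compactness_def by metis

lemma consistent_Union_chain:
  assumes "C_logic C" and "weak_compactness C"
    and "c \<noteq> {}" and "subset.chain {X. consistent C X} c"
  shows "consistent C (\<Union>c)"
  unfolding consistent_def
proof
  assume "C (\<Union>c) = UNIV"
  then obtain F where F: "F \<subseteq> \<Union>c" "finite F" "C F = UNIV"
    using assms(2) weak_compactnessD by metis
  obtain X where "X \<in> c" and "F \<subseteq> X"
    using finite_subset_Union_chain[OF F(2,1) assms(3,4)] .
  have "C X = UNIV"
    using C_logic_inconsistent_mono[OF assms(1) \<open>F \<subseteq> X\<close> F(3)] .
  moreover have "consistent C X"
    using \<open>X \<in> c\<close> assms(4) unfolding subset.chain_def by blast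
  ultimately show False
    unfolding consistent_def by simp
qed

lemma Lindenbaum:
  assumes "C_logic C" and "weak_compactness C" and "consistent C X"
  obtains M where "X \<subseteq> M" and "maximal_consistent C M"
proof -
  define S where "S = {Y. X \<subseteq> Y \<and> consistent C Y}"
  have "\<Union>c \<in> S" if "c \<noteq> {}" and "subset.chain S c" for c
  proof -
    have "subset.chain {Y. consistent C Y} c"
      using that(2) unfolding S_def subset.chain_def by blast
    then have "consistent C (\<Union>c)"
      using consistent_Union_chain[OF assms(1,2) that(1)] by simp
    moreover have "X \<subseteq> \<Union>c"
      using that unfolding S_def subset.chain_def by blast
    ultimately show ?thesis
      unfolding S_def by simp
  qed
  moreover have "X \<in> S"
    using assms(3) unfolding S_def by simp
  ultimately obtain M where "M \<in> S" and M_max: "\<forall>Y\<in>S. M \<subseteq> Y \<longrightarrow> Y = M"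
    using subset_Zorn_nonempty[of S] by blast
  have "maximal_consistent C M"
    unfolding maximal_consistent_def
  proof (intro conjI allI impI notI)
    show "consistent C M"
      using \<open>M \<in> S\<close> unfolding S_def by simp
    fix Y assume "M \<subset> Y" and "consistent C Y"
    with \<open>M \<in> S\<close> have "Y \<in> S"
      unfolding S_def by auto
    with M_max \<open>M \<subset> Y\<close> show False by auto
  qed
  moreover have "X \<subseteq> M"
    using \<open>M \<in> S\<close> unfolding S_def by simp
  ultimately show thesis
    using that by simp
qed

lemma neg_R2_consistent_insert_neg:
  assumes "neg_R2 C neg" and "a \<notin> C A"
  shows "consistent C (A \<union> {neg a})"
  using assms unfolding neg_R2_def consistent_def by metis

lemma neg_R1_consistent_not_both:
  assumes "neg_R1 C neg" and "consistent C M" and "neg a \<in> M"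
  shows "a \<notin> M"
proof
  assume "a \<in> M"
  with assms(3) have "M \<union> {a, neg a} = M" by blast
  with assms(1,2) show False
    unfolding neg_R1_def consistent_def by metis
qed

theorem lemma14:
  fixes C :: "'a set \<Rightarrow> 'a set" and neg :: "'a \<Rightarrow> 'a"
    and A :: "'a set" and a :: 'a
  assumes "C_logic C"
    and "weak_compactness C"
    and "neg_R1 C neg"
    and "neg_R2 C neg"
    and "a \<notin> C A"
  shows "\<exists>B. A \<subseteq> B \<and> maximal_consistent C B \<and> a \<notin> B"
proof -
  have "consistent C (A \<union> {neg a})"
    using neg_R2_consistent_insert_neg[OF assms(4,5)] .
  then obtain B where B: "A \<union> {neg a} \<subseteq> B" and B_max: "maximal_consistent C B"
    using Lindenbaum[OF assms(1,2)] by metis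
  then have "a \<notin> B"
    using neg_R1_consistent_not_both[OF assms(3)] unfolding maximal_consistent_def by blast
  with B B_max show ?thesis by blast
qed

end
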